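(* Let $\mathcal{R}$ be a ring and let $(\mathcal{C}^{\bullet},\partial)$ be a bigraded cochain complex of $\mathcal{R}$-modules as described in the context. Then there is a commutative diagram with exact rows and exact columns whose rows are \[ 0\to B^{1}(\mathcal{N}_{0},\overline{\partial})\hookrightarrow B^{1}(\mathcal{C},\partial)\xrightarrow{\pi_{1}} B^{1}(\mathcal{C}^{0,\bullet},\partial_{0,1})\to 0, \] \[ 0\to Z^{1}(\mathcal{N}_{0},\overline{\partial})\hookrightarrow Z^{1}(\mathcal{C},\partial)\xrightarrow{\pi_{1}} \ker(\rho_{1})\to 0, \] \[ 0\to H^{1}(\mathcal{N}_{0},\overline{\partial})\to H^{1}(\mathcal{C},\partial)\to \frac{\ker(\rho_{1})}{B^{1}(\mathcal{C}^{0,\bullet},\partial_{0,1})}\to 0, \] where the vertical maps from the first to the second row are inclusions, the vertical maps from the second to the third row are the canonical quotient projections, and the maps of the third row are the ones induced by those of the second row. In particular, $B^{1}(\mathcal{C}^{0,\bullet},\partial_{0,1})\subseteq\ker(\rho_{1})$ and the last row is a short exact sequence.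
   Context: Setting: $\mathcal{C}^{\bullet}=\bigoplus_{k\in\mathbb{Z}}\mathcal{C}^{k}$ is a graded $\mathcal{R}$-module with a compatible bigrading $\mathcal{C}^{k}=\bigoplus_{p+q=k}\mathcal{C}^{p,q}$, where $\mathcal{C}^{p,q}=\{0\}$ whenever $p<0$ or $q<0$; $\partial$ is an $\mathcal{R}$-linear map of degree $1$ with $\partial^{2}=0$, and $\partial=\partial_{2,-1}+\partial_{1,0}+\partial_{0,1}$ with $\partial_{i,j}(\mathcal{C}^{p,q})\subseteq\mathcal{C}^{p+i,q+j}$. For $\eta\in\mathcal{C}^{k}$, $\eta_{p,q}$ denotes its component in $\mathcal{C}^{p,q}$. For $q\in\mathbb{Z}$, $G^{q}\mathcal{C}:=\bigoplus_{j\geq q}\mathcal{C}^{i,j}$ and $\pi_{q}:\mathcal{C}\to G^{q}\mathcal{C}$ is the projection along the bigrading. $Z,B,H$ denote cocycles, coboundaries, cohomology; since $\partial_{0,1}^{2}=0$, $(\mathcal{C}^{0,\bullet},\partial_{0,1})$ is a cochain complex. Let $\mathcal{N}^{p,q}:=\ker(\partial_{0,1}|_{\mathcal{C}^{p,q}})\cap\ker(\partial_{2,-1}|_{\mathcal{C}^{p,q}})$ and $\mathcal{N}_{0}:=\bigoplus_{p}\mathcal{N}^{p,0}$ (so $\mathcal{N}^{p,0}=\ker(\partial_{0,1}:\mathcal{C}^{p,0}\to\mathcal{C}^{p,1})$, in degree $p$); this is a subcomplex of $(\mathcal{C},\partial)$ and $\overline{\partial}$ denotes the restriction of $\partial$ to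 it (which equals $\partial_{1,0}$ there). Let $\mathcal{A}^{k}:=\{\pi_{1}(\eta)\mid\eta\in\mathcal{C}^{k},\ \pi_{1}(\partial\eta)=0\}$. For $\xi\in\mathcal{A}^{k}$ and any $\eta\in\mathcal{C}^{k}$ with $\pi_{1}\eta=\xi$, $\pi_{1}(\partial\eta)=0$, the element $\partial_{2,-1}\xi_{k-1,1}+\partial_{1,0}\eta_{k,0}$ is a $(k+1)$-cocycle of $(\mathcal{N}_{0},\overline{\partial})$ whose cohomology class depends only on $\xi$; this defines the linear map $\rho_{k}:\mathcal{A}^{k}\to H^{k+1}(\mathcal{N}_{0},\overline{\partial})$, $\rho_{k}(\xi):=[\partial_{2,-1}\xi_{k-1,1}+\partial_{1,0}\eta_{k,0}]$. *)

theory Defs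
  imports Main "HOL-Library.Function_Algebras"
begin

text \<open>The ring R is a type 'r of class ring_1; an R-module structure
on an abelian group type 'm is a scalar multiplication s. The bigraded module
C = direct sum of the C^{p,q} is represented by families x :: int => int => 'm
with x p q in C^{p,q} (a submodule of 'm) and finite support. The component
differentials d21, d10, d01 are given on each C^{p,q}: d_ij p q maps C^{p,q}
into C^{p+i,q+j}.\<close>

definition is_lmodule :: "('r::ring_1 \<Rightarrow> 'm::ab_group_add \<Rightarrow> 'm) \<Rightarrow> bool" where
  "is_lmodule s \<longleftrightarrow>
     (\<forall>a x y. s a (x + y) = s a x + s a y) \<and>
     (\<forall>a b x. s (a + b) x = s a x + s b x) \<and>
     (\<forall>a b x. s (a * b) x = s a (s b x)) \<and>
     (\<forall>x. s 1 x = x)"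

definition is_submodule :: "('r::ring_1 \<Rightarrow> 'm::ab_group_add \<Rightarrow> 'm) \<Rightarrow> 'm set \<Rightarrow> bool" where
  "is_submodule s M \<longleftrightarrow> 0 \<in> M \<and> (\<forall>x\<in>M. \<forall>y\<in>M. x + y \<in> M) \<and>
     (\<forall>x\<in>M. - x \<in> M) \<and> (\<forall>a. \<forall>x\<in>M. s a x \<in> M)"

definition is_linear_on :: "('r::ring_1 \<Rightarrow> 'm::ab_group_add \<Rightarrow> 'm) \<Rightarrow> 'm set \<Rightarrow> 'm set \<Rightarrow> ('m \<Rightarrow> 'm) \<Rightarrow> bool" where
  "is_linear_on s M M' f \<longleftrightarrow> (\<forall>x\<in>M. f x \<in> M') \<and>
     (\<forall>x\<in>M. \<forall>y\<in>M. f (x + y) = f x + f y) \<and> (\<forall>a. \<forall>x\<in>M. f (s a x) = s a (f x))"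

definition fam :: "(int \<Rightarrow> int \<Rightarrow> 'm::zero set) \<Rightarrow> (int \<Rightarrow> int \<Rightarrow> 'm) \<Rightarrow> bool" where
  "fam Cc x \<longleftrightarrow> (\<forall>p q. x p q \<in> Cc p q) \<and> finite {(p, q). x p q \<noteq> 0}"

definition Cdeg :: "(int \<Rightarrow> int \<Rightarrow> 'm::zero set) \<Rightarrow> int \<Rightarrow> (int \<Rightarrow> int \<Rightarrow> 'm) set" where
  "Cdeg Cc k = {x. fam Cc x \<and> (\<forall>p q. p + q \<noteq> k \<longrightarrow> x p q = 0)}"

definition Dop :: "int \<Rightarrow> int \<Rightarrow> (int \<Rightarrow> int \<Rightarrow> 'm \<Rightarrow> 'm) \<Rightarrow> (int \<Rightarrow> int \<Rightarrow> 'm) \<Rightarrow> (int \<Rightarrow> int \<Rightarrow> 'm)" where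
  "Dop i j d x = (\<lambda>p q. d (p - i) (q - j) (x (p - i) (q - j)))"

definition Dtot :: "(int \<Rightarrow> int \<Rightarrow> 'm::ab_group_add \<Rightarrow> 'm) \<Rightarrow> (int \<Rightarrow> int \<Rightarrow> 'm \<Rightarrow> 'm) \<Rightarrow>
    (int \<Rightarrow> int \<Rightarrow> 'm \<Rightarrow> 'm) \<Rightarrow> (int \<Rightarrow> int \<Rightarrow> 'm) \<Rightarrow> (int \<Rightarrow> int \<Rightarrow> 'm)" where
  "Dtot d21 d10 d01 x = Dop 2 (-1) d21 x + Dop 1 0 d10 x + Dop 0 1 d01 x"

definition bigraded_complex :: "('r::ring_1 \<Rightarrow> 'm::ab_group_add \<Rightarrow> 'm) \<Rightarrow> (int \<Rightarrow> int \<Rightarrow> 'm set) \<Rightarrow>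
    (int \<Rightarrow> int \<Rightarrow> 'm \<Rightarrow> 'm) \<Rightarrow> (int \<Rightarrow> int \<Rightarrow> 'm \<Rightarrow> 'm) \<Rightarrow> (int \<Rightarrow> int \<Rightarrow> 'm \<Rightarrow> 'm) \<Rightarrow> bool" where
  "bigraded_complex s Cc d21 d10 d01 \<longleftrightarrow>
     is_lmodule s \<and>
     (\<forall>p q. is_submodule s (Cc p q)) \<and>
     (\<forall>p q. p < 0 \<or> q < 0 \<longrightarrow> Cc p q = {0}) \<and>
     (\<forall>p q. is_linear_on s (Cc p q) (Cc (p + 2) (q - 1)) (d21 p q)) \<and>
     (\<forall>p q. is_linear_on s (Cc p q) (Cc (p + 1) q) (d10 p q)) \<and>
     (\<forall>p q. is_linear_on s (Cc p q) (Cc p (q + 1)) (d01 p q)) \<and>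
     (\<forall>x. fam Cc x \<longrightarrow> Dtot d21 d10 d01 (Dtot d21 d10 d01 x) = 0)"

definition proj :: "int \<Rightarrow> (int \<Rightarrow> int \<Rightarrow> 'm::zero) \<Rightarrow> (int \<Rightarrow> int \<Rightarrow> 'm)" where
  "proj q0 x = (\<lambda>i j. if j \<ge> q0 then x i j else 0)"

text \<open>Cocycles, coboundaries and cohomology of a cochain complex given by its
degree-k pieces S k and differential D. Cohomology classes are cosets.\<close>

definition cocyc :: "(int \<Rightarrow> 'a::ab_group_add set) \<Rightarrow> ('a \<Rightarrow> 'a) \<Rightarrow> int \<Rightarrow> 'a set" where
  "cocyc S D k = {x \<in> S k. D x = 0}"

definition cobd :: "(int \<Rightarrow> 'a::ab_group_add set) \<Rightarrow> ('a \<Rightarrow> 'a) \<Rightarrow> int \<Rightarrow> 'a set" where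
  "cobd S D k = D ` S (k - 1)"

definition coset :: "'a::ab_group_add set \<Rightarrow> 'a \<Rightarrow> 'a set" where
  "coset B x = (\<lambda>b. x + b) ` B"

definition quot :: "'a::ab_group_add set \<Rightarrow> 'a set \<Rightarrow> 'a set set" where
  "quot A B = coset B ` A"

definition cohom :: "(int \<Rightarrow> 'a::ab_group_add set) \<Rightarrow> ('a \<Rightarrow> 'a) \<Rightarrow> int \<Rightarrow> 'a set set" where
  "cohom S D k = quot (cocyc S D k) (cobd S D k)"

definition Npq :: "(int \<Rightarrow> int \<Rightarrow> 'm::zero set) \<Rightarrow> (int \<Rightarrow> int \<Rightarrow> 'm \<Rightarrow> 'm) \<Rightarrow> (int \<Rightarrow> int \<Rightarrow> 'm \<Rightarrow> 'm) \<Rightarrow> int \<Rightarrow> int \<Rightarrow> 'm set" where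
  "Npq Cc d21 d01 p q = {c \<in> Cc p q. d01 p q c = 0 \<and> d21 p q c = 0}"

definition N0deg :: "(int \<Rightarrow> int \<Rightarrow> 'm::zero set) \<Rightarrow> (int \<Rightarrow> int \<Rightarrow> 'm \<Rightarrow> 'm) \<Rightarrow> (int \<Rightarrow> int \<Rightarrow> 'm \<Rightarrow> 'm) \<Rightarrow> int \<Rightarrow> (int \<Rightarrow> int \<Rightarrow> 'm) set" where
  "N0deg Cc d21 d01 k = {x \<in> Cdeg Cc k. (\<forall>p q. q \<noteq> 0 \<longrightarrow> x p q = 0) \<and> (\<forall>p. x p 0 \<in> Npq Cc d21 d01 p 0)}"

definition C0deg :: "(int \<Rightarrow> int \<Rightarrow> 'm::zero set) \<Rightarrow> int \<Rightarrow> (int \<Rightarrow> int \<Rightarrow> 'm) set" where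
  "C0deg Cc k = {x \<in> Cdeg Cc k. \<forall>p q. p \<noteq> 0 \<longrightarrow> x p q = 0}"

definition Aset :: "(int \<Rightarrow> int \<Rightarrow> 'm::ab_group_add set) \<Rightarrow> (int \<Rightarrow> int \<Rightarrow> 'm \<Rightarrow> 'm) \<Rightarrow> (int \<Rightarrow> int \<Rightarrow> 'm \<Rightarrow> 'm) \<Rightarrow>
    (int \<Rightarrow> int \<Rightarrow> 'm \<Rightarrow> 'm) \<Rightarrow> int \<Rightarrow> (int \<Rightarrow> int \<Rightarrow> 'm) set" where
  "Aset Cc d21 d10 d01 k = {proj 1 \<eta> | \<eta>. \<eta> \<in> Cdeg Cc k \<and> proj 1 (Dtot d21 d10 d01 \<eta>) = 0}"

definition rho :: "(int \<Rightarrow> int \<Rightarrow> 'm::ab_group_add set) \<Rightarrow> (int \<Rightarrow> int \<Rightarrow> 'm \<Rightarrow> 'm) \<Rightarrow> (int \<Rightarrow> int \<Rightarrow> 'm \<Rightarrow> 'm) \<Rightarrow>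
    (int \<Rightarrow> int \<Rightarrow> 'm \<Rightarrow> 'm) \<Rightarrow> int \<Rightarrow> (int \<Rightarrow> int \<Rightarrow> 'm) \<Rightarrow> (int \<Rightarrow> int \<Rightarrow> 'm) set" where
  "rho Cc d21 d10 d01 k \<xi> =
     (let \<eta> = (SOME \<eta>. \<eta> \<in> Cdeg Cc k \<and> proj 1 \<eta> = \<xi> \<and> proj 1 (Dtot d21 d10 d01 \<eta>) = 0)
      in coset (cobd (N0deg Cc d21 d01) (Dtot d21 d10 d01) (k + 1))
           (\<lambda>p q. if p = k + 1 \<and> q = 0 then d21 (k - 1) 1 (\<xi> (k - 1) 1) + d10 k 0 (\<eta> k 0) else 0))"

definition ker_rho :: "(int \<Rightarrow> int \<Rightarrow> 'm::ab_group_add set) \<Rightarrow> (int \<Rightarrow> int \<Rightarrow> 'm \<Rightarrow> 'm) \<Rightarrow> (int \<Rightarrow> int \<Rightarrow> 'm \<Rightarrow> 'm) \<Rightarrow>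
    (int \<Rightarrow> int \<Rightarrow> 'm \<Rightarrow> 'm) \<Rightarrow> int \<Rightarrow> (int \<Rightarrow> int \<Rightarrow> 'm) set" where
  "ker_rho Cc d21 d10 d01 k = {\<xi> \<in> Aset Cc d21 d10 d01 k.
      rho Cc d21 d10 d01 k \<xi> = coset (cobd (N0deg Cc d21 d01) (Dtot d21 d10 d01) (k + 1)) 0}"

definition short_exact :: "'a set \<Rightarrow> 'b set \<Rightarrow> 'c set \<Rightarrow> ('a \<Rightarrow> 'b) \<Rightarrow> ('b \<Rightarrow> 'c) \<Rightarrow> 'a \<Rightarrow> 'b \<Rightarrow> 'c \<Rightarrow> bool" where
  "short_exact A B C f g zA zB zC \<longleftrightarrow>
     zA \<in> A \<and> zB \<in> B \<and> zC \<in> C \<and> f ` A \<subseteq> B \<and> g ` B \<subseteq> C \<and>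
     {a \<in> A. f a = zB} = {zA} \<and> {b \<in> B. g b = zC} = f ` A \<and> g ` B = C"

end

theory Submission
  imports Defs
begin

text \<open>On \<open>\<C>\<^sup>0 = \<C>\<^sup>0\<^sup>,\<^sup>0\<close> the only component of \<open>\<partial>\<close> reaching \<open>G\<^sup>1\<C>\<close> is \<open>\<partial>\<^sub>0\<^sub>,\<^sub>1\<close>, so \<open>\<pi>\<^sub>1\<close> maps
  \<open>B\<^sup>1(\<C>)\<close> onto \<open>B\<^sup>1(\<C>\<^sup>0\<^sup>,\<^sup>\<bullet>)\<close>. For a lift \<open>\<eta>\<close> of \<open>\<xi> \<in> \<A>\<^sup>1\<close> the cocycle defining \<open>\<rho>\<^sub>1(\<xi>)\<close> is
  exactly \<open>\<partial>\<eta>\<close>, and any two lifts differ by an element of \<open>\<N>\<^sub>0\<close>; hence \<open>\<rho>\<^sub>1(\<xi>) = 0\<close> iff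
  \<open>\<xi>\<close> lifts to a cocycle, i.e. \<open>\<pi>\<^sub>1\<close> maps \<open>Z\<^sup>1(\<C>)\<close> onto \<open>ker \<rho>\<^sub>1\<close>. In both rows the kernel of
  \<open>\<pi>\<^sub>1\<close> is the corresponding group of \<open>\<N>\<^sub>0\<close>, because \<open>\<N>\<^sub>0\<close> consists precisely of the \<open>\<eta>\<close>
  with \<open>\<pi>\<^sub>1 \<eta> = 0\<close> and \<open>\<pi>\<^sub>1 \<partial>\<eta> = 0\<close>. Exactness of the cohomology row then follows from that of
  the two rows above it, as in the nine lemma.\<close>

definition additive_subgroup :: "'a::ab_group_add set \<Rightarrow> bool" where
  "additive_subgroup B \<longleftrightarrow> 0 \<in> B \<and> (\<forall>x\<in>B. \<forall>y\<in>B. x - y \<in> B)"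

lemma additive_subgroup_zero: "additive_subgroup B \<Longrightarrow> 0 \<in> B"
  unfolding additive_subgroup_def by blast

lemma additive_subgroup_diff: "additive_subgroup B \<Longrightarrow> x \<in> B \<Longrightarrow> y \<in> B \<Longrightarrow> x - y \<in> B"
  unfolding additive_subgroup_def by blast

lemma additive_subgroup_add:
  assumes "additive_subgroup B" "x \<in> B" "y \<in> B"
  shows "x + y \<in> B"
proof -
  have "0 - y \<in> B" using assms additive_subgroup_zero additive_subgroup_diff by blast
  then have "x - (0 - y) \<in> B" using assms additive_subgroup_diff by blast
  then show ?thesis by simp
qed

lemma additive_subgroup_image:
  fixes f :: "'a::ab_group_add \<Rightarrow> 'b::ab_group_add"
  assumes "additive_subgroup S" and f_diff: "\<And>x y. x \<in> S \<Longrightarrow> y \<in> S \<Longrightarrow> f (x - y) = f x - f y"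
  shows "additive_subgroup (f ` S)"
proof -
  have "0 \<in> S" using assms(1) by (rule additive_subgroup_zero)
  then have "f 0 = 0" using f_diff[of 0 0] by simp
  then have "0 \<in> f ` S" using \<open>0 \<in> S\<close> by (metis image_eqI)
  moreover have "f x - f y \<in> f ` S" if "x \<in> S" "y \<in> S" for x y
    using that f_diff[OF that] additive_subgroup_diff[OF assms(1) that] by (metis image_eqI)
  ultimately show ?thesis unfolding additive_subgroup_def by blast
qed

lemma additive_subgroup_kernel:
  fixes f :: "'a::ab_group_add \<Rightarrow> 'b::ab_group_add"
  assumes "additive_subgroup S" and f_diff: "\<And>x y. x \<in> S \<Longrightarrow> y \<in> S \<Longrightarrow> f (x - y) = f x - f y"
  shows "additive_subgroup {x \<in> S. f x = 0}"
  using additive_subgroup_zero[OF assms(1)] f_diff[of 0 0] f_diff additive_subgroup_diff[OF assms(1)]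
  unfolding additive_subgroup_def by auto

lemma coset_eq_iff:
  assumes "additive_subgroup B"
  shows "coset B x = coset B y \<longleftrightarrow> x - y \<in> B"
proof
  assume "coset B x = coset B y"
  moreover have "x \<in> coset B x"
    unfolding coset_def using additive_subgroup_zero[OF assms] by (metis add_0_right image_eqI)
  ultimately obtain b where "b \<in> B" "x = y + b" unfolding coset_def by auto
  then show "x - y \<in> B" by simp
next
  have sub: "coset B x \<subseteq> coset B y" if "x - y \<in> B" for x y
  proof
    fix z assume "z \<in> coset B x"
    then obtain b where "b \<in> B" "z = x + b" unfolding coset_def by auto
    then have "(x - y) + b \<in> B" "z = y + ((x - y) + b)"
      using that additive_subgroup_add[OF assms] by auto
    then show "z \<in> coset B y" unfolding coset_def by blast
  qed
  assume "x - y \<in> B"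
  moreover then have "y - x \<in> B"
    using additive_subgroup_diff[OF assms additive_subgroup_zero[OF assms]] by force
  ultimately show "coset B x = coset B y" using sub by blast
qed

lemma some_in_coset_diff:
  assumes "additive_subgroup B"
  shows "(SOME x. x \<in> coset B z) - z \<in> B"
proof -
  have "z \<in> coset B z"
    unfolding coset_def using additive_subgroup_zero[OF assms] by (metis add_0_right image_eqI)
  then have "(SOME x. x \<in> coset B z) \<in> coset B z" by (rule someI)
  then show ?thesis unfolding coset_def by auto
qed

lemma short_exact_quot:
  assumes "additive_subgroup B" "B \<subseteq> Z"
  shows "short_exact B Z (quot Z B) id (coset B) 0 0 (coset B 0)"
proof -
  have "{z \<in> Z. coset B z = coset B 0} = B" using coset_eq_iff[OF assms(1)] assms(2) by auto
  then show ?thesis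
    unfolding short_exact_def quot_def using additive_subgroup_zero[OF assms(1)] assms(2) by auto
qed

lemma short_exact_inclusionI:
  assumes "0 \<in> A" "\<pi> ` B = C" "{b \<in> B. \<pi> b = 0} = A"
  shows "short_exact A B C id \<pi> 0 0 0"
  using assms unfolding short_exact_def by force

text \<open>Only meaningful on cosets \<open>coset A z\<close> with \<open>\<phi> ` A \<subseteq> B\<close>, see \<open>quot_map_coset\<close>.\<close>

definition quot_map :: "('a \<Rightarrow> 'b::ab_group_add) \<Rightarrow> 'b set \<Rightarrow> 'a set \<Rightarrow> 'b set" where
  "quot_map \<phi> B X = coset B (\<phi> (SOME x. x \<in> X))"

lemma quot_map_coset:
  assumes "additive_subgroup A" "additive_subgroup B" "\<phi> ` A \<subseteq> B"
    and \<phi>_diff: "\<And>x y. \<phi> (x - y) = \<phi> x - \<phi> y"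
  shows "quot_map \<phi> B (coset A z) = coset B (\<phi> z)"
proof -
  have "\<phi> ((SOME x. x \<in> coset A z) - z) \<in> B"
    using some_in_coset_diff[OF assms(1)] assms(3) by blast
  then show ?thesis unfolding quot_map_def \<phi>_diff coset_eq_iff[OF assms(2)] .
qed

locale exact_subgroup_rows =
  fixes \<pi> :: "'a::ab_group_add \<Rightarrow> 'b::ab_group_add"
    and BN BC :: "'a set" and B0 :: "'b set" and ZN ZC :: "'a set" and K :: "'b set"
  assumes subgroups: "additive_subgroup BN" "additive_subgroup BC" "additive_subgroup ZC"
    and BC_subset_ZC: "BC \<subseteq> ZC"
    and \<pi>_diff: "\<pi> (x - y) = \<pi> x - \<pi> y"
    and row_B: "short_exact BN BC B0 id \<pi> 0 0 0"
    and row_Z: "short_exact ZN ZC K id \<pi> 0 0 0"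
begin

lemma B0_eq: "B0 = \<pi> ` BC" and BN_eq: "BN = {b \<in> BC. \<pi> b = 0}"
  using row_B unfolding short_exact_def by auto

lemma K_eq: "K = \<pi> ` ZC" and ZN_eq: "ZN = {z \<in> ZC. \<pi> z = 0}"
  and zero_in_rows: "0 \<in> ZN" "0 \<in> ZC" "0 \<in> K"
  using row_Z unfolding short_exact_def by auto

lemma additive_subgroup_B0: "additive_subgroup B0"
  unfolding B0_eq using subgroups(2) \<pi>_diff by (rule additive_subgroup_image)

lemma B0_subset_K: "B0 \<subseteq> K"
  unfolding B0_eq K_eq using BC_subset_ZC by (rule image_mono)

lemma quot_map_id_coset: "quot_map id BC (coset BN z) = coset BC z"
  using quot_map_coset[OF subgroups(1,2)] BN_eq by auto

lemma quot_map_\<pi>_coset: "quot_map \<pi> B0 (coset BC z) = coset B0 (\<pi> z)"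
  using quot_map_coset[OF subgroups(2) additive_subgroup_B0] B0_eq \<pi>_diff by blast

lemma quot_map_id_kernel: "{a \<in> quot ZN BN. quot_map id BC a = coset BC 0} = {coset BN 0}"
proof (intro equalityI subsetI)
  fix a assume "a \<in> {a \<in> quot ZN BN. quot_map id BC a = coset BC 0}"
  then obtain z where z: "z \<in> ZN" "a = coset BN z" "coset BC z = coset BC 0"
    unfolding quot_def using quot_map_id_coset by auto
  then have "z \<in> BC" "\<pi> z = 0" using coset_eq_iff[OF subgroups(2)] ZN_eq by auto
  then show "a \<in> {coset BN 0}" using z(2) coset_eq_iff[OF subgroups(1)] BN_eq by simp
qed (use quot_map_id_coset zero_in_rows(1) in \<open>auto simp: quot_def\<close>)

lemma quot_map_\<pi>_kernel:
  "{b \<in> quot ZC BC. quot_map \<pi> B0 b = coset B0 0} = quot_map id BC ` quot ZN BN"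
proof (intro equalityI subsetI)
  fix b assume "b \<in> {b \<in> quot ZC BC. quot_map \<pi> B0 b = coset B0 0}"
  then obtain z where z: "z \<in> ZC" "b = coset BC z" "coset B0 (\<pi> z) = coset B0 0"
    unfolding quot_def using quot_map_\<pi>_coset by auto
  then have "\<pi> z \<in> B0" using coset_eq_iff[OF additive_subgroup_B0] by simp
  then obtain c where c: "c \<in> BC" "\<pi> z = \<pi> c" unfolding B0_eq by blast
  then have "z - c \<in> ZC"
    using z(1) additive_subgroup_diff[OF subgroups(3)] BC_subset_ZC by blast
  then have "z - c \<in> ZN" using c(2) \<pi>_diff ZN_eq by simp
  moreover have "b = coset BC (z - c)" using z(2) c(1) coset_eq_iff[OF subgroups(2)] by simp
  ultimately show "b \<in> quot_map id BC ` quot ZN BN"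
    unfolding quot_def quot_map_id_coset[symmetric] by blast
qed (use quot_map_id_coset quot_map_\<pi>_coset ZN_eq in \<open>auto simp: quot_def\<close>)

lemma short_exact_quot_row:
  "short_exact (quot ZN BN) (quot ZC BC) (quot K B0) (quot_map id BC) (quot_map \<pi> B0)
    (coset BN 0) (coset BC 0) (coset B0 0)"
  unfolding short_exact_def
proof (intro conjI quot_map_id_kernel quot_map_\<pi>_kernel)
  show "coset BN 0 \<in> quot ZN BN" "coset BC 0 \<in> quot ZC BC" "coset B0 0 \<in> quot K B0"
    unfolding quot_def using zero_in_rows by (blast intro: imageI)+
  show "quot_map id BC ` quot ZN BN \<subseteq> quot ZC BC"
    using quot_map_id_coset ZN_eq unfolding quot_def by auto
  show "quot_map \<pi> B0 ` quot ZC BC = quot K B0"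
    using quot_map_\<pi>_coset K_eq unfolding quot_def by (auto simp: image_image)
  then show "quot_map \<pi> B0 ` quot ZC BC \<subseteq> quot K B0" by simp
qed

end

lemma is_linear_on_diff:
  assumes "is_linear_on s M M' f" "is_submodule s M" "x \<in> M" "y \<in> M"
  shows "f (x - y) = f x - f y"
proof -
  have "x - y \<in> M"
    using assms(2-4) unfolding is_submodule_def by (metis diff_conv_add_uminus)
  then have "f ((x - y) + y) = f (x - y) + f y"
    using assms(1,4) unfolding is_linear_on_def by blast
  then show ?thesis by simp
qed

lemma proj_eq_0_iff: "proj q0 x = 0 \<longleftrightarrow> (\<forall>p q. q0 \<le> q \<longrightarrow> x p q = 0)"
  by (auto simp: proj_def fun_eq_iff)

lemma proj_zero [simp]: "proj q0 0 = 0"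
  by (simp add: proj_def fun_eq_iff)

lemma proj_diff:
  fixes x y :: "int \<Rightarrow> int \<Rightarrow> 'a::ab_group_add"
  shows "proj q0 (x - y) = proj q0 x - proj q0 y"
  by (simp add: proj_def fun_eq_iff)

locale bigraded_cochain_complex =
  fixes s :: "'r::ring_1 \<Rightarrow> 'm::ab_group_add \<Rightarrow> 'm" and Cc :: "int \<Rightarrow> int \<Rightarrow> 'm set"
    and d21 d10 d01 :: "int \<Rightarrow> int \<Rightarrow> 'm \<Rightarrow> 'm"
  assumes complex: "bigraded_complex s Cc d21 d10 d01"
begin

abbreviation "D \<equiv> Dtot d21 d10 d01"
abbreviation "N0 \<equiv> N0deg Cc d21 d01"

lemma submodule_C: "is_submodule s (Cc p q)"
  using complex unfolding bigraded_complex_def by blast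

lemma zero_in_C [simp]: "0 \<in> Cc p q"
  using submodule_C unfolding is_submodule_def by blast

lemma add_in_C [simp]: "x \<in> Cc p q \<Longrightarrow> y \<in> Cc p q \<Longrightarrow> x + y \<in> Cc p q"
  using submodule_C unfolding is_submodule_def by blast

lemma diff_in_C [simp]: "x \<in> Cc p q \<Longrightarrow> y \<in> Cc p q \<Longrightarrow> x - y \<in> Cc p q"
  using submodule_C unfolding is_submodule_def by (metis diff_conv_add_uminus)

lemma C_negative_index: "x \<in> Cc p q \<Longrightarrow> p < 0 \<or> q < 0 \<Longrightarrow> x = 0"
  using complex unfolding bigraded_complex_def by blast

lemma linear_d21: "is_linear_on s (Cc p q) (Cc (p + 2) (q - 1)) (d21 p q)"
  and linear_d10: "is_linear_on s (Cc p q) (Cc (p + 1) q) (d10 p q)"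
  and linear_d01: "is_linear_on s (Cc p q) (Cc p (q + 1)) (d01 p q)"
  using complex unfolding bigraded_complex_def by blast+

lemma d_in_C:
  "x \<in> Cc p q \<Longrightarrow> d21 p q x \<in> Cc (p + 2) (q - 1)"
  "x \<in> Cc p q \<Longrightarrow> d10 p q x \<in> Cc (p + 1) q"
  "x \<in> Cc p q \<Longrightarrow> d01 p q x \<in> Cc p (q + 1)"
  using linear_d21[of p q] linear_d10[of p q] linear_d01[of p q]
  unfolding is_linear_on_def by blast+

lemma d_diff:
  "x \<in> Cc p q \<Longrightarrow> y \<in> Cc p q \<Longrightarrow> d21 p q (x - y) = d21 p q x - d21 p q y"
  "x \<in> Cc p q \<Longrightarrow> y \<in> Cc p q \<Longrightarrow> d10 p q (x - y) = d10 p q x - d10 p q y"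
  "x \<in> Cc p q \<Longrightarrow> y \<in> Cc p q \<Longrightarrow> d01 p q (x - y) = d01 p q x - d01 p q y"
  using is_linear_on_diff[OF linear_d21 submodule_C] is_linear_on_diff[OF linear_d10 submodule_C]
    is_linear_on_diff[OF linear_d01 submodule_C] by blast+

lemma d_zero [simp]: "d21 p q 0 = 0" "d10 p q 0 = 0" "d01 p q 0 = 0"
  using d_diff[OF zero_in_C zero_in_C] by simp_all

lemma D_apply:
  "D x p q = d21 (p - 2) (q + 1) (x (p - 2) (q + 1)) + d10 (p - 1) q (x (p - 1) q)
    + d01 p (q - 1) (x p (q - 1))"
  unfolding Dtot_def Dop_def by simp

lemma Cdeg_iff:
  "x \<in> Cdeg Cc k \<longleftrightarrow> (\<forall>p q. x p q \<in> Cc p q) \<and> (\<forall>p q. p + q \<noteq> k \<longrightarrow> x p q = 0)"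
proof -
  have "finite {(p, q). x p q \<noteq> 0}"
    if "\<forall>p q. x p q \<in> Cc p q" "\<forall>p q. p + q \<noteq> k \<longrightarrow> x p q = 0"
  proof (rule finite_subset)
    show "{(p, q). x p q \<noteq> 0} \<subseteq> {0..k} \<times> {0..k}"
    proof clarify
      fix p q assume "x p q \<noteq> 0"
      then have "p + q = k" "\<not> (p < 0 \<or> q < 0)"
        using that C_negative_index[of "x p q" p q] by blast+
      then show "p \<in> {0..k} \<and> q \<in> {0..k}" by simp
    qed
  qed simp
  then show ?thesis unfolding Cdeg_def fam_def by auto
qed

lemma Cdeg_in_C: "x \<in> Cdeg Cc k \<Longrightarrow> x p q \<in> Cc p q"
  and Cdeg_off_degree: "x \<in> Cdeg Cc k \<Longrightarrow> p + q \<noteq> k \<Longrightarrow> x p q = 0"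
  by (simp_all add: Cdeg_iff)

lemma Cdeg_negative_index: "x \<in> Cdeg Cc k \<Longrightarrow> p < 0 \<or> q < 0 \<Longrightarrow> x p q = 0"
  using Cdeg_in_C C_negative_index by blast

lemma additive_subgroup_Cdeg: "additive_subgroup (Cdeg Cc k)"
  unfolding additive_subgroup_def by (simp add: Cdeg_iff)

lemma Cdeg_diff: "x \<in> Cdeg Cc k \<Longrightarrow> y \<in> Cdeg Cc k \<Longrightarrow> x - y \<in> Cdeg Cc k"
  by (rule additive_subgroup_diff[OF additive_subgroup_Cdeg])

lemma D_in_Cdeg:
  assumes "x \<in> Cdeg Cc k"
  shows "D x \<in> Cdeg Cc (k + 1)"
  unfolding Cdeg_iff
proof (intro conjI allI impI)
  fix p q
  have "d21 (p - 2) (q + 1) (x (p - 2) (q + 1)) \<in> Cc p q"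
    "d10 (p - 1) q (x (p - 1) q) \<in> Cc p q" "d01 p (q - 1) (x p (q - 1)) \<in> Cc p q"
    using d_in_C[OF Cdeg_in_C[OF assms]] by (metis add_diff_cancel diff_add_cancel)+
  then show "D x p q \<in> Cc p q" unfolding D_apply by simp
next
  fix p q :: int assume "p + q \<noteq> k + 1"
  then show "D x p q = 0" unfolding D_apply using Cdeg_off_degree[OF assms] by simp
qed

lemma D_diff: "x \<in> Cdeg Cc k \<Longrightarrow> y \<in> Cdeg Cc k \<Longrightarrow> D (x - y) = D x - D y"
  by (intro ext) (simp add: D_apply d_diff Cdeg_in_C)

lemma D_D: "x \<in> Cdeg Cc k \<Longrightarrow> D (D x) = 0"
  using complex unfolding bigraded_complex_def Cdeg_def by blast

lemma Cdeg0_support: "x \<in> Cdeg Cc 0 \<Longrightarrow> p \<noteq> 0 \<or> q \<noteq> 0 \<Longrightarrow> x p q = 0"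
  using Cdeg_off_degree[of x 0 p q] Cdeg_negative_index[of x 0 p q] by linarith

lemma proj_Cdeg0_eq_0: "x \<in> Cdeg Cc 0 \<Longrightarrow> proj 1 x = 0"
  unfolding proj_eq_0_iff using Cdeg0_support by simp

lemma N0deg_iff: "x \<in> N0 k \<longleftrightarrow> x \<in> Cdeg Cc k \<and> proj 1 x = 0 \<and> proj 1 (D x) = 0"
proof -
  have proj_x: "proj 1 x = 0 \<longleftrightarrow> (\<forall>p q. q \<noteq> 0 \<longrightarrow> x p q = 0)" if "x \<in> Cdeg Cc k"
    unfolding proj_eq_0_iff
  proof (intro iffI allI impI)
    fix p q :: int assume "\<forall>p q. 1 \<le> q \<longrightarrow> x p q = 0" "q \<noteq> 0"
    then show "x p q = 0" using Cdeg_negative_index[OF that, of p q] by (cases "1 \<le> q") auto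
  qed auto
  have proj_Dx: "proj 1 (D x) = 0 \<longleftrightarrow> (\<forall>p. d01 p 0 (x p 0) = 0)"
    if "\<forall>p q. q \<noteq> 0 \<longrightarrow> x p q = 0"
  proof -
    have "D x p q = (if q = 1 then d01 p 0 (x p 0) else 0)" if "1 \<le> q" for p q
      using that \<open>\<forall>p q. q \<noteq> 0 \<longrightarrow> x p q = 0\<close> by (simp add: D_apply)
    then show ?thesis unfolding proj_eq_0_iff by (metis order_refl)
  qed
  \<comment> \<open>the condition on \<open>\<partial>\<^sub>2\<^sub>,\<^sub>-\<^sub>1\<close> in \<open>Npq\<close> is void in row \<open>q = 0\<close>: its target is \<open>\<C>\<^sup>p\<^sup>+\<^sup>2\<^sup>,\<^sup>-\<^sup>1 = 0\<close>\<close>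
  have "d21 p 0 (x p 0) = 0" if "x \<in> Cdeg Cc k" for p
    using C_negative_index[OF d_in_C(1)[OF Cdeg_in_C[OF that]]] by simp
  then show ?thesis
    unfolding N0deg_def Npq_def using Cdeg_in_C proj_x proj_Dx by auto
qed

lemma N0_subset_Cdeg: "N0 k \<subseteq> Cdeg Cc k"
  using N0deg_iff by blast

lemma additive_subgroup_N0: "additive_subgroup (N0 k)"
proof -
  have "additive_subgroup {x \<in> Cdeg Cc k. proj 1 x = 0}"
    using additive_subgroup_Cdeg by (rule additive_subgroup_kernel) (rule proj_diff)
  then have "additive_subgroup {x \<in> {x \<in> Cdeg Cc k. proj 1 x = 0}. proj 1 (D x) = 0}"
    by (rule additive_subgroup_kernel) (auto simp: D_diff proj_diff)
  moreover have "{x \<in> {x \<in> Cdeg Cc k. proj 1 x = 0}. proj 1 (D x) = 0} = N0 k"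
    using N0deg_iff by auto
  ultimately show ?thesis by simp
qed

lemma additive_subgroup_cobd_Cdeg: "additive_subgroup (cobd (Cdeg Cc) D k)"
  unfolding cobd_def by (rule additive_subgroup_image[OF additive_subgroup_Cdeg]) (rule D_diff)

lemma additive_subgroup_cobd_N0: "additive_subgroup (cobd N0 D k)"
  unfolding cobd_def
  by (rule additive_subgroup_image[OF additive_subgroup_N0]) (use D_diff N0_subset_Cdeg in blast)

lemma additive_subgroup_cocyc_Cdeg: "additive_subgroup (cocyc (Cdeg Cc) D k)"
  unfolding cocyc_def by (rule additive_subgroup_kernel[OF additive_subgroup_Cdeg]) (rule D_diff)

lemma cobd_subset_cocyc: "cobd (Cdeg Cc) D k \<subseteq> cocyc (Cdeg Cc) D k"
  unfolding cobd_def cocyc_def using D_in_Cdeg[of _ "k - 1"] D_D by auto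

lemma cobd_N0_subset_cocyc_N0: "cobd N0 D k \<subseteq> cocyc N0 D k"
proof
  fix b assume "b \<in> cobd N0 D k"
  then obtain x where x: "x \<in> N0 (k - 1)" and b: "b = D x" unfolding cobd_def by blast
  then have "x \<in> Cdeg Cc (k - 1)" "proj 1 (D x) = 0" using N0deg_iff by blast+
  then have "D x \<in> N0 k" "D (D x) = 0" using N0deg_iff D_in_Cdeg[of x "k - 1"] D_D by auto
  then show "b \<in> cocyc N0 D k" unfolding cocyc_def b by simp
qed

lemma cocyc_N0_eq: "cocyc N0 D k = {z \<in> cocyc (Cdeg Cc) D k. proj 1 z = 0}"
  unfolding cocyc_def N0deg_iff by auto

lemma cobd_N0_deg1_eq: "cobd N0 D 1 = {b \<in> cobd (Cdeg Cc) D 1. proj 1 b = 0}"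
  unfolding cobd_def using N0deg_iff proj_Cdeg0_eq_0 by auto

lemma proj_D_Cdeg0: "x \<in> Cdeg Cc 0 \<Longrightarrow> proj 1 (D x) = Dop 0 1 d01 x"
  by (intro ext) (simp add: proj_def Dop_def D_apply Cdeg0_support)

lemma proj_cobd_deg1_eq: "proj 1 ` cobd (Cdeg Cc) D 1 = cobd (C0deg Cc) (Dop 0 1 d01) 1"
proof -
  have "C0deg Cc 0 = Cdeg Cc 0" unfolding C0deg_def using Cdeg0_support by auto
  then show ?thesis unfolding cobd_def using proj_D_Cdeg0 by (simp add: image_image)
qed

text \<open>The right-hand side is the cocycle whose class is \<open>\<rho>\<^sub>1 (\<pi>\<^sub>1 \<eta>)\<close>.\<close>

lemma D_deg1_eq:
  assumes "\<eta> \<in> Cdeg Cc 1" "proj 1 (D \<eta>) = 0"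
  shows "D \<eta> = (\<lambda>p q. if p = 2 \<and> q = 0 then d21 0 1 (\<eta> 0 1) + d10 1 0 (\<eta> 1 0) else 0)"
proof (intro ext)
  fix p q :: int
  have "D \<eta> \<in> Cdeg Cc 2" using D_in_Cdeg[OF assms(1)] by simp
  consider "1 \<le> q" | "q < 0" | "q = 0" "p = 2" | "q = 0" "p \<noteq> 2" by linarith
  then show "D \<eta> p q = (if p = 2 \<and> q = 0 then d21 0 1 (\<eta> 0 1) + d10 1 0 (\<eta> 1 0) else 0)"
  proof cases
    case 1
    then show ?thesis using assms(2) unfolding proj_eq_0_iff by simp
  next
    case 2
    then show ?thesis using Cdeg_negative_index[OF \<open>D \<eta> \<in> Cdeg Cc 2\<close>] by simp
  next
    case 3
    then show ?thesis by (simp add: D_apply Cdeg_negative_index[OF assms(1)])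
  next
    case 4
    then show ?thesis using Cdeg_off_degree[OF \<open>D \<eta> \<in> Cdeg Cc 2\<close>] by simp
  qed
qed

lemma rho_deg1_eq:
  assumes "\<eta> \<in> Cdeg Cc 1" "proj 1 (D \<eta>) = 0"
  shows "rho Cc d21 d10 d01 1 (proj 1 \<eta>) = coset (cobd N0 D 2) (D \<eta>)"
proof -
  define \<eta>' where "\<eta>' = (SOME \<eta>'. \<eta>' \<in> Cdeg Cc 1 \<and> proj 1 \<eta>' = proj 1 \<eta> \<and> proj 1 (D \<eta>') = 0)"
  have \<eta>': "\<eta>' \<in> Cdeg Cc 1" "proj 1 \<eta>' = proj 1 \<eta>" "proj 1 (D \<eta>') = 0"
    unfolding \<eta>'_def using someI[where P = "\<lambda>\<eta>'. \<eta>' \<in> Cdeg Cc 1 \<and> proj 1 \<eta>' = proj 1 \<eta>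
      \<and> proj 1 (D \<eta>') = 0"] assms by blast+
  have "proj 1 \<eta> 0 1 = \<eta>' 0 1" using \<eta>'(2) by (metis proj_def order_refl)
  then have "rho Cc d21 d10 d01 1 (proj 1 \<eta>) = coset (cobd N0 D 2) (D \<eta>')"
    unfolding rho_def Let_def \<eta>'_def[symmetric] D_deg1_eq[OF \<eta>'(1,3)]
    by (simp cong: if_cong)
  also have "\<dots> = coset (cobd N0 D 2) (D \<eta>)"
  proof -
    \<comment> \<open>so the choice of lift made by \<open>SOME\<close> in \<open>rho\<close> is irrelevant\<close>
    have "\<eta>' - \<eta> \<in> N0 1"
      using \<eta>' assms Cdeg_diff by (simp add: N0deg_iff D_diff proj_diff)
    then have "D \<eta>' - D \<eta> \<in> cobd N0 D 2"
      unfolding cobd_def using D_diff[OF \<eta>'(1) assms(1)] by force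
    then show ?thesis using coset_eq_iff[OF additive_subgroup_cobd_N0] by blast
  qed
  finally show ?thesis .
qed

lemma ker_rho_deg1_eq: "ker_rho Cc d21 d10 d01 1 = proj 1 ` cocyc (Cdeg Cc) D 1"
proof (intro equalityI subsetI)
  fix \<xi> assume \<xi>: "\<xi> \<in> ker_rho Cc d21 d10 d01 1"
  then obtain \<eta> where \<eta>: "\<eta> \<in> Cdeg Cc 1" "proj 1 (D \<eta>) = 0" "\<xi> = proj 1 \<eta>"
    unfolding ker_rho_def Aset_def by auto
  with \<xi> have "coset (cobd N0 D 2) (D \<eta>) = coset (cobd N0 D 2) 0"
    unfolding ker_rho_def using rho_deg1_eq by simp
  then have "D \<eta> \<in> cobd N0 D 2" using coset_eq_iff[OF additive_subgroup_cobd_N0] by simp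
  then obtain w where w: "w \<in> N0 1" "D \<eta> = D w" unfolding cobd_def by auto
  then have "w \<in> Cdeg Cc 1" "proj 1 w = 0" using N0deg_iff by blast+
  then have "\<eta> - w \<in> cocyc (Cdeg Cc) D 1" "\<xi> = proj 1 (\<eta> - w)"
    unfolding cocyc_def using \<eta> w Cdeg_diff D_diff by (simp_all add: proj_diff)
  then show "\<xi> \<in> proj 1 ` cocyc (Cdeg Cc) D 1" by blast
next
  fix \<xi> assume "\<xi> \<in> proj 1 ` cocyc (Cdeg Cc) D 1"
  then obtain z where z: "z \<in> Cdeg Cc 1" "D z = 0" "\<xi> = proj 1 z" unfolding cocyc_def by auto
  then have "\<xi> \<in> Aset Cc d21 d10 d01 1" unfolding Aset_def by auto
  moreover have "rho Cc d21 d10 d01 1 \<xi> = coset (cobd N0 D 2) 0"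
    using rho_deg1_eq[of z] z by simp
  ultimately show "\<xi> \<in> ker_rho Cc d21 d10 d01 1" unfolding ker_rho_def by simp
qed

lemma coboundary_row_short_exact:
  "short_exact (cobd N0 D 1) (cobd (Cdeg Cc) D 1) (cobd (C0deg Cc) (Dop 0 1 d01) 1) id (proj 1) 0 0 0"
  using additive_subgroup_zero[OF additive_subgroup_cobd_N0]
  by (rule short_exact_inclusionI) (simp_all add: proj_cobd_deg1_eq cobd_N0_deg1_eq)

lemma cocycle_row_short_exact:
  "short_exact (cocyc N0 D 1) (cocyc (Cdeg Cc) D 1) (ker_rho Cc d21 d10 d01 1) id (proj 1) 0 0 0"
  using cobd_N0_subset_cocyc_N0 additive_subgroup_zero[OF additive_subgroup_cobd_N0]
  by (intro short_exact_inclusionI) (auto simp: ker_rho_deg1_eq cocyc_N0_eq)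

end

theorem theorem5p3:
  fixes s :: "'r::ring_1 \<Rightarrow> 'm::ab_group_add \<Rightarrow> 'm"
    and Cc :: "int \<Rightarrow> int \<Rightarrow> 'm set"
    and d21 d10 d01 :: "int \<Rightarrow> int \<Rightarrow> 'm \<Rightarrow> 'm"
  assumes "bigraded_complex s Cc d21 d10 d01"
  defines "D \<equiv> Dtot d21 d10 d01"
    and "D01 \<equiv> Dop 0 1 d01"
    and "N0 \<equiv> N0deg Cc d21 d01"
    and "C0 \<equiv> C0deg Cc"
    and "K \<equiv> ker_rho Cc d21 d10 d01 1"
  shows "cobd C0 D01 1 \<subseteq> K \<and>
    (\<exists>f3 g3.
      \<comment> \<open>rows\<close>
      short_exact (cobd N0 D 1) (cobd (Cdeg Cc) D 1) (cobd C0 D01 1) id (proj 1) 0 0 0 \<and>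
      short_exact (cocyc N0 D 1) (cocyc (Cdeg Cc) D 1) K id (proj 1) 0 0 0 \<and>
      short_exact (cohom N0 D 1) (cohom (Cdeg Cc) D 1) (quot K (cobd C0 D01 1)) f3 g3
        (coset (cobd N0 D 1) 0) (coset (cobd (Cdeg Cc) D 1) 0) (coset (cobd C0 D01 1) 0) \<and>
      \<comment> \<open>columns\<close>
      short_exact (cobd N0 D 1) (cocyc N0 D 1) (cohom N0 D 1) id (coset (cobd N0 D 1)) 0 0
        (coset (cobd N0 D 1) 0) \<and>
      short_exact (cobd (Cdeg Cc) D 1) (cocyc (Cdeg Cc) D 1) (cohom (Cdeg Cc) D 1) id
        (coset (cobd (Cdeg Cc) D 1)) 0 0 (coset (cobd (Cdeg Cc) D 1) 0) \<and>
      short_exact (cobd C0 D01 1) K (quot K (cobd C0 D01 1)) id (coset (cobd C0 D01 1)) 0 0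
        (coset (cobd C0 D01 1) 0) \<and>
      \<comment> \<open>commutativity (upper squares commute trivially; lower squares:)\<close>
      (\<forall>z \<in> cocyc N0 D 1. f3 (coset (cobd N0 D 1) z) = coset (cobd (Cdeg Cc) D 1) (id z)) \<and>
      (\<forall>z \<in> cocyc (Cdeg Cc) D 1. g3 (coset (cobd (Cdeg Cc) D 1) z) = coset (cobd C0 D01 1) (proj 1 z)))"
proof -
  interpret bigraded_cochain_complex s Cc d21 d10 d01
    by (rule bigraded_cochain_complex.intro) (fact assms)
  interpret rows: exact_subgroup_rows "proj 1"
      "cobd (N0deg Cc d21 d01) (Dtot d21 d10 d01) 1" "cobd (Cdeg Cc) (Dtot d21 d10 d01) 1"
      "cobd (C0deg Cc) (Dop 0 1 d01) 1" "cocyc (N0deg Cc d21 d01) (Dtot d21 d10 d01) 1"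
      "cocyc (Cdeg Cc) (Dtot d21 d10 d01) 1" "ker_rho Cc d21 d10 d01 1"
    using additive_subgroup_cobd_N0 additive_subgroup_cobd_Cdeg additive_subgroup_cocyc_Cdeg
      cobd_subset_cocyc proj_diff coboundary_row_short_exact cocycle_row_short_exact
    by unfold_locales
  show ?thesis
    unfolding D_def D01_def N0_def C0_def K_def cohom_def
    apply (rule conjI[OF rows.B0_subset_K])
    apply (rule exI[of _ "quot_map id (cobd (Cdeg Cc) (Dtot d21 d10 d01) 1)"])
    apply (rule exI[of _ "quot_map (proj 1) (cobd (C0deg Cc) (Dop 0 1 d01) 1)"])
    using coboundary_row_short_exact cocycle_row_short_exact rows.short_exact_quot_row
      rows.quot_map_id_coset rows.quot_map_\<pi>_coset
      short_exact_quot[OF additive_subgroup_cobd_N0 cobd_N0_subset_cocyc_N0]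
      short_exact_quot[OF additive_subgroup_cobd_Cdeg cobd_subset_cocyc]
      short_exact_quot[OF rows.additive_subgroup_B0 rows.B0_subset_K]
    by simp
qed

end
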